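(* Fix $d \geq 1$, permutations $\rho,\sigma \in S(d)$ and an integer $r \geq 2$. Let $\mathrm{Walk}_r(\rho,\sigma)$ be the set of $r$-tuples $W = ((s_1\ t_1),\dots,(s_r\ t_r))$ of transpositions in $S(d)$, with $s_i<t_i$, such that $\sigma = \rho (s_1\ t_1)\cdots(s_r\ t_r)$. For $1 \leq i \leq r-1$, define $R_i : \mathrm{Walk}_r(\rho,\sigma) \to \mathrm{Walk}_r(\rho,\sigma)$ as follows. $R_i W$ agrees with $W$ except in positions $i$ and $i+1$, which are replaced by $(\ast\ t_{i+1}), (\ast\ t_i)$ (in that order), where: - if $t_i < t_{i+1}$, then $(\ast\ t_{i+1}) = (s_i\ t_i)(s_{i+1}\ t_{i+1})(s_i\ t_i)$ and $(\ast\ t_i) = (s_i\ t_i)$; - if $t_i > t_{i+1}$, then $(\ast\ t_{i+1}) = (s_{i+1}\ t_{i+1})$ and $(\ast\ t_i) = (s_{i+1}\ t_{i+1})(s_i\ t_i)(s_{i+1}\ t_{i+1})$; - if $t_i = t_{i+1}$, then $R_i W = W$. Then the operators $R_i$ satisfy: - $R_i^2 = I$ for $1 \leq i \leq r-1$; - $R_iR_{i+1}R_i = R_{i+1}R_iR_{i+1}$ for $1 \leq i \leq r-2$; - $R_iR_j = R_jR_i$ for $1 \leq i,j \leq r-1$ with $|i-j| \geq 2$. Moreover, if $W$ is transitive, then so is $R_iW$.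
   Context: A transposition of $S(d)$ is written $(s\ t)$ with $s<t$. A walk $W \in \mathrm{Walk}_r(\rho,\sigma)$ is called transitive if the subgroup of $S(d)$ generated by $\rho$, $\sigma$ and the transpositions of $W$ acts transitively on $\{1,\dots,d\}$. *)

theory Defs
  imports "HOL-Algebra.Sym_Groups"
begin

text \<open>A transposition (s t) with s < t is represented by the pair (s, t);
  as a permutation of {1..d} it is Transposition.transpose s t.
  Permutations are multiplied by composition: (p q) x = p (q x).\<close>

definition tr :: "nat \<times> nat \<Rightarrow> nat \<Rightarrow> nat" where
  "tr p = transpose (fst p) (snd p)"

definition walk_prod :: "(nat \<times> nat) list \<Rightarrow> nat \<Rightarrow> nat" where
  "walk_prod W = foldr (\<lambda>p f. tr p \<circ> f) W id"

definition Walk :: "nat \<Rightarrow> nat \<Rightarrow> (nat \<Rightarrow> nat) \<Rightarrow> (nat \<Rightarrow> nat) \<Rightarrow> (nat \<times> nat) list set" where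
  "Walk d r \<rho> \<sigma> = {W. length W = r \<and>
      (\<forall>p \<in> set W. 1 \<le> fst p \<and> fst p < snd p \<and> snd p \<le> d) \<and>
      \<sigma> = \<rho> \<circ> walk_prod W}"

definition tconj :: "nat \<times> nat \<Rightarrow> nat \<times> nat \<Rightarrow> nat \<times> nat" where
  "tconj c p = (let x = tr c (fst p); y = tr c (snd p) in (min x y, max x y))"

text \<open>The operator R_i (1-based index i, 1 \<le> i \<le> r-1): acts on positions i and i+1,
  i.e. list indices i-1 and i.\<close>
definition R :: "nat \<Rightarrow> (nat \<times> nat) list \<Rightarrow> (nat \<times> nat) list" where
  "R i W = (let p = W ! (i - 1); q = W ! i in
     if snd p < snd q then W[i - 1 := tconj p q, i := p]
     else if snd p > snd q then W[i - 1 := q, i := tconj q p]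
     else W)"

definition transitive_walk :: "nat \<Rightarrow> (nat \<Rightarrow> nat) \<Rightarrow> (nat \<Rightarrow> nat) \<Rightarrow> (nat \<times> nat) list \<Rightarrow> bool" where
  "transitive_walk d \<rho> \<sigma> W \<longleftrightarrow>
     (\<forall>x \<in> {1..d}. \<forall>y \<in> {1..d}.
        \<exists>g \<in> generate (sym_group d) ({\<rho>, \<sigma>} \<union> tr ` set W). g x = y)"

end

theory Submission
  imports Defs
begin

text \<open>
  \<open>R\<^sub>i\<close> is a Hurwitz move: it only rewrites the window of positions \<open>i, i + 1\<close>, replacing
  the pair \<open>\<tau>\<^sub>1, \<tau>\<^sub>2\<close> either by \<open>\<tau>\<^sub>1\<tau>\<^sub>2\<tau>\<^sub>1, \<tau>\<^sub>1\<close> or by \<open>\<tau>\<^sub>2, \<tau>\<^sub>2\<tau>\<^sub>1\<tau>\<^sub>2\<close>. Both keep the product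
  \<open>\<tau>\<^sub>1\<tau>\<^sub>2\<close>, so walks go to walks, and the new transpositions are conjugates of the old ones,
  so the group generated by \<open>\<rho>\<close>, \<open>\<sigma>\<close> and the walk can only shrink; as \<open>R\<^sub>i\<close> is an
  involution it is in fact unchanged, which gives transitivity.
\<close>

lemma transpose_conjugate:
  "transpose (transpose a b x) (transpose a b y) = transpose a b \<circ> transpose x y \<circ> transpose a b"
  by (auto simp: fun_eq_iff transpose_def)

lemma transpose_conjugate_apply:
  "c \<noteq> a \<Longrightarrow> c \<noteq> b \<Longrightarrow>
    transpose (transpose a b x) c z = transpose a b (transpose x c (transpose a b z))"
  using transpose_conjugate[of a b x c] by (simp add: fun_eq_iff)

lemma transpose_less: "a < t \<Longrightarrow> b < t \<Longrightarrow> x < t \<Longrightarrow> transpose a b x < t"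
  by (simp add: transpose_def)

lemma tr_tconj: "tr (tconj c p) = tr c \<circ> tr p \<circ> tr c"
  by (simp add: tconj_def tr_def Let_def min_def max_def transpose_commute transpose_conjugate)

lemma tconj_less:
  "s < t \<Longrightarrow> t < t' \<Longrightarrow> s' < t' \<Longrightarrow> tconj (s, t) (s', t') = (transpose s t s', t')"
  by (auto simp: tconj_def tr_def Let_def transpose_def)

lemma tr_comp_involutory [simp]: "tr p \<circ> tr p = id"
  by (simp add: tr_def)

lemma tr_comp_cancel: "tr p \<circ> (tr p \<circ> f) = f"
  by (simp flip: comp_assoc)

lemma walk_prod_append: "walk_prod (xs @ ys) = walk_prod xs \<circ> walk_prod ys"
  by (induction xs) (auto simp: walk_prod_def)

definition transpositions :: "nat \<Rightarrow> (nat \<times> nat) set" where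
  "transpositions d = {(s, t). 1 \<le> s \<and> s < t \<and> t \<le> d}"

lemma Walk_iff:
  "W \<in> Walk d r \<rho> \<sigma> \<longleftrightarrow> length W = r \<and> set W \<subseteq> transpositions d \<and> \<sigma> = \<rho> \<circ> walk_prod W"
  by (auto simp: Walk_def transpositions_def)

lemma tr_in_sym_group: "p \<in> transpositions d \<Longrightarrow> tr p \<in> carrier (sym_group d)"
  by (auto simp: transpositions_def tr_def sym_group_carrier intro!: permutes_swap_id)

lemma split_window:
  assumes "k + n \<le> length W"
  obtains xs zs ys where "W = xs @ zs @ ys" "length xs = k" "length zs = n"
  using assms by (intro that[of "take k W" "take n (drop k W)" "drop n (drop k W)"])
    (simp_all del: drop_drop)

lemma length_2_conv: "length zs = 2 \<longleftrightarrow> (\<exists>p q. zs = [p, q])"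
  by (auto simp: numeral_2_eq_2 length_Suc_conv)

lemma length_R [simp]: "length (R i W) = length W"
  by (simp add: R_def Let_def)

lemma R_window:
  assumes "length xs = k" "0 < i" "i < length zs"
  shows "R (k + i) (xs @ zs @ ys) = xs @ R i zs @ ys"
  using assms by (auto simp: R_def Let_def nth_append list_update_append)

lemma R_commute:
  assumes "0 < i" "i + 1 < j"
  shows "R i (R j W) = R j (R i W)"
  using assms by (simp add: R_def Let_def list_update_swap)

lemma obtain_R_pair_window:
  assumes "0 < i" "i < length W"
  obtains xs p q ys where "W = xs @ [p, q] @ ys" "length xs = i - 1"
    "R i W = xs @ R 1 [p, q] @ ys"
proof -
  obtain xs zs ys where W: "W = xs @ zs @ ys" "length xs = i - 1" "length zs = 2"
    using assms split_window[of "i - 1" 2 W] by auto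
  from W(3) obtain p q where zs: "zs = [p, q]"
    by (auto simp: length_2_conv)
  have "R i W = xs @ R 1 zs @ ys"
    using R_window[of xs "i - 1" 1 zs ys] W assms(1) by simp
  then show thesis
    using W(1,2) zs by (intro that) simp_all
qed

lemma R_R_pair: "s < t \<Longrightarrow> s' < t' \<Longrightarrow> R 1 (R 1 [(s, t), (s', t')]) = [(s, t), (s', t')]"
  by (cases t t' rule: linorder_cases) (auto simp: R_def tconj_less transpose_def)

lemma R_braid_triple:
  assumes "s1 < t1" "s2 < t2" "s3 < t3"
  shows "R 1 (R 2 (R 1 [(s1, t1), (s2, t2), (s3, t3)])) = R 2 (R 1 (R 2 [(s1, t1), (s2, t2), (s3, t3)]))"
  using assms
  by (cases t1 t2 rule: linorder_cases; cases t2 t3 rule: linorder_cases; cases t1 t3 rule: linorder_cases)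
     (simp_all add: R_def tconj_less transpose_less transpose_conjugate_apply)

lemma walk_prod_R_pair: "walk_prod (R 1 [p, q]) = walk_prod [p, q]"
  by (simp add: R_def walk_prod_def tr_tconj comp_assoc tr_comp_cancel)

lemma tr_R_pair: "tr ` set (R 1 [p, q]) \<subseteq> {tr p, tr q, tr p \<circ> tr q \<circ> tr p, tr q \<circ> tr p \<circ> tr q}"
  by (auto simp: R_def tr_tconj)

lemma R_pair_transpositions:
  "set [p, q] \<subseteq> transpositions d \<Longrightarrow> set (R 1 [p, q]) \<subseteq> transpositions d"
  by (auto simp: R_def transpositions_def tconj_def tr_def Let_def transpose_def min_def max_def)

lemma R_in_Walk:
  assumes "W \<in> Walk d r \<rho> \<sigma>" "0 < i" "i < r"
  shows "R i W \<in> Walk d r \<rho> \<sigma>"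
proof -
  have W: "length W = r" "set W \<subseteq> transpositions d" "\<sigma> = \<rho> \<circ> walk_prod W"
    using assms(1) by (auto simp: Walk_iff)
  obtain xs p q ys where split: "W = xs @ [p, q] @ ys" "R i W = xs @ R 1 [p, q] @ ys"
    using obtain_R_pair_window[of i W] assms(2,3) W(1) by metis
  have "set (R 1 [p, q]) \<subseteq> transpositions d"
    using W(2) split(1) by (intro R_pair_transpositions) auto
  moreover have "walk_prod (R i W) = walk_prod W"
    unfolding split(2) by (simp only: split(1) walk_prod_append walk_prod_R_pair)
  ultimately show ?thesis
    using W split by (auto simp: Walk_iff)
qed

lemma R_R:
  assumes "set W \<subseteq> transpositions d" "0 < i" "i < length W"
  shows "R i (R i W) = W"
proof -
  obtain xs p q ys where split: "W = xs @ [p, q] @ ys" "length xs = i - 1"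
    "R i W = xs @ R 1 [p, q] @ ys"
    using obtain_R_pair_window[OF assms(2,3)] by blast
  have "fst p < snd p" "fst q < snd q"
    using assms(1) split(1) by (auto simp: transpositions_def)
  then have pair: "R 1 (R 1 [p, q]) = [p, q]"
    using R_R_pair by (metis prod.collapse)
  have "R i (R i W) = xs @ R 1 (R 1 [p, q]) @ ys"
    using R_window[of xs "i - 1" 1 "R 1 [p, q]" ys] split(2,3) assms(2) by simp
  then show ?thesis
    using pair split(1) by simp
qed

lemma R_braid:
  assumes "set W \<subseteq> transpositions d" "0 < i" "i + 1 < length W"
  shows "R i (R (i + 1) (R i W)) = R (i + 1) (R i (R (i + 1) W))"
proof -
  obtain xs zs ys where W: "W = xs @ zs @ ys" "length xs = i - 1" "length zs = 3"
    using assms(2,3) split_window[of "i - 1" 3 W] by auto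
  have local: "R i (xs @ zs' @ ys) = xs @ R 1 zs' @ ys"
    "R (i + 1) (xs @ zs' @ ys) = xs @ R 2 zs' @ ys" if "length zs' = 3" for zs'
    using R_window[of xs "i - 1" 1 zs' ys] R_window[of xs "i - 1" 2 zs' ys] W(2) that assms(2)
    by simp_all
  have window: "R i (R (i + 1) (R i W)) = xs @ R 1 (R 2 (R 1 zs)) @ ys"
    "R (i + 1) (R i (R (i + 1) W)) = xs @ R 2 (R 1 (R 2 zs)) @ ys"
    by (simp_all only: W(1,3) local length_R)
  obtain s1 t1 s2 t2 s3 t3 where zs: "zs = [(s1, t1), (s2, t2), (s3, t3)]"
    using W(3) by (auto simp: numeral_3_eq_3 length_Suc_conv)
  have "s1 < t1" "s2 < t2" "s3 < t3"
    using assms(1) W(1) zs by (auto simp: transpositions_def)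
  then have "R 1 (R 2 (R 1 zs)) = R 2 (R 1 (R 2 zs))"
    unfolding zs by (rule R_braid_triple)
  with window show ?thesis by (simp only:)
qed

lemma generate_R_subset:
  assumes "A \<subseteq> carrier (sym_group d)" "set W \<subseteq> transpositions d" "0 < i" "i < length W"
  shows "generate (sym_group d) (A \<union> tr ` set (R i W)) \<subseteq> generate (sym_group d) (A \<union> tr ` set W)"
proof -
  interpret sym: group "sym_group d" by (rule sym_group_is_group)
  let ?H = "generate (sym_group d) (A \<union> tr ` set W)"
  obtain xs p q ys where split: "W = xs @ [p, q] @ ys" "R i W = xs @ R 1 [p, q] @ ys"
    using obtain_R_pair_window[OF assms(3,4)] by metis
  have gens: "A \<union> tr ` set W \<subseteq> carrier (sym_group d)"
    using assms(1,2) tr_in_sym_group by auto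
  have comp: "f \<circ> g \<in> ?H" if "f \<in> ?H" "g \<in> ?H" for f g
    using generate.eng[OF that] by (simp add: sym_group_mult)
  have "tr p \<in> ?H" "tr q \<in> ?H"
    using split(1) by (auto intro: generate.incl)
  then have "{tr p, tr q, tr p \<circ> tr q \<circ> tr p, tr q \<circ> tr p \<circ> tr q} \<subseteq> ?H"
    by (simp add: comp)
  with tr_R_pair have "tr ` set (R 1 [p, q]) \<subseteq> ?H"
    by (rule subset_trans)
  moreover have "A \<union> tr ` set xs \<union> tr ` set ys \<subseteq> ?H"
    using split(1) by (auto intro: generate.incl)
  ultimately have "A \<union> tr ` set (R i W) \<subseteq> ?H"
    unfolding split(2) by auto
  then show ?thesis
    by (rule sym.generate_subgroup_incl[OF _ sym.generate_is_subgroup[OF gens]])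
qed

lemma transitive_walk_R:
  assumes "W \<in> Walk d r \<rho> \<sigma>" "\<rho> permutes {1..d}" "\<sigma> permutes {1..d}" "0 < i" "i < r"
    "transitive_walk d \<rho> \<sigma> W"
  shows "transitive_walk d \<rho> \<sigma> (R i W)"
proof -
  have W: "length W = r" "set W \<subseteq> transpositions d"
    using assms(1) by (auto simp: Walk_iff)
  have RW: "set (R i W) \<subseteq> transpositions d"
    using R_in_Walk[OF assms(1,4,5)] by (auto simp: Walk_iff)
  have "{\<rho>, \<sigma>} \<subseteq> carrier (sym_group d)"
    using assms(2,3) by (simp add: sym_group_carrier)
  from generate_R_subset[OF this RW assms(4)] have
    "generate (sym_group d) ({\<rho>, \<sigma>} \<union> tr ` set W) \<subseteq> generate (sym_group d) ({\<rho>, \<sigma>} \<union> tr ` set (R i W))"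
    using R_R[OF W(2) assms(4)] W(1) assms(5) by simp
  with assms(6) show ?thesis
    unfolding transitive_walk_def by blast
qed

theorem proposition2p1:
  fixes d r :: nat and \<rho> \<sigma> :: "nat \<Rightarrow> nat"
  assumes "d \<ge> 1" and "\<rho> permutes {1..d}" and "\<sigma> permutes {1..d}" and "r \<ge> 2"
  shows "(\<forall>i \<in> {1..r-1}. \<forall>W \<in> Walk d r \<rho> \<sigma>. R i W \<in> Walk d r \<rho> \<sigma>) \<and>
    (\<forall>i \<in> {1..r-1}. \<forall>W \<in> Walk d r \<rho> \<sigma>. R i (R i W) = W) \<and>
    (\<forall>i \<in> {1..r-2}. \<forall>W \<in> Walk d r \<rho> \<sigma>. R i (R (i+1) (R i W)) = R (i+1) (R i (R (i+1) W))) \<and>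
    (\<forall>i \<in> {1..r-1}. \<forall>j \<in> {1..r-1}. \<bar>int i - int j\<bar> \<ge> 2 \<longrightarrow>
           (\<forall>W \<in> Walk d r \<rho> \<sigma>. R i (R j W) = R j (R i W))) \<and>
    (\<forall>i \<in> {1..r-1}. \<forall>W \<in> Walk d r \<rho> \<sigma>. transitive_walk d \<rho> \<sigma> W \<longrightarrow> transitive_walk d \<rho> \<sigma> (R i W))"
proof (intro conjI ballI impI)
  fix i j W
  assume W: "W \<in> Walk d r \<rho> \<sigma>"
  then have len: "length W = r" and trans: "set W \<subseteq> transpositions d"
    by (auto simp: Walk_iff)
  show "R i W \<in> Walk d r \<rho> \<sigma>" if "i \<in> {1..r-1}"
    using R_in_Walk[OF W] that by auto
  show "R i (R i W) = W" if "i \<in> {1..r-1}"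
    using R_R[OF trans] len that by auto
  show "R i (R (i+1) (R i W)) = R (i+1) (R i (R (i+1) W))" if "i \<in> {1..r-2}"
    using R_braid[OF trans] len that by auto
  show "R i (R j W) = R j (R i W)" if "i \<in> {1..r-1}" "j \<in> {1..r-1}" "\<bar>int i - int j\<bar> \<ge> 2"
    using that R_commute[of i j W] R_commute[of j i W] by (cases "i < j") auto
  show "transitive_walk d \<rho> \<sigma> (R i W)" if "i \<in> {1..r-1}" "transitive_walk d \<rho> \<sigma> W"
    using transitive_walk_R[OF W assms(2,3)] that by auto
qed

end
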